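(* Let $\beta\ge 2$ and $t\ge 0$ be integers, and let $G$ be a cactus with $2\beta$ vertices, exactly $t$ cycles, a perfect matching, and minimum degree $\delta(G)\ge 2$. Then $$SO(G)<\Phi(\beta,t)=(\beta+t-1)\sqrt{(\beta+t)^{2}+4}+\sqrt{(\beta+t)^{2}+1}+\sqrt{5}\,(\beta-t-1)+2\sqrt{2}\,t.$$
   Context: All graphs are finite, simple and connected. For a graph $G$, $d_u$ denotes the degree of vertex $u$, $\delta(G)$ the minimum degree, and the Sombor index is $SO(G)=\sum_{uv\in E(G)}\sqrt{d_u^2+d_v^2}$. A cactus is a connected graph in which any two cycles have at most one common vertex. *)

theory Defs
  imports Complex_Main
begin

definition simple_graph :: "'a set \<Rightarrow> 'a set set \<Rightarrow> bool" where
  "simple_graph V E \<longleftrightarrow> finite V \<and> (\<forall>e\<in>E. e \<subseteq> V \<and> card e = 2)"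

definition adjacent :: "'a set set \<Rightarrow> 'a \<Rightarrow> 'a \<Rightarrow> bool" where
  "adjacent E u v \<longleftrightarrow> {u, v} \<in> E"

definition connected_graph :: "'a set \<Rightarrow> 'a set set \<Rightarrow> bool" where
  "connected_graph V E \<longleftrightarrow> V \<noteq> {} \<and> (\<forall>u\<in>V. \<forall>v\<in>V. (adjacent E)\<^sup>*\<^sup>* u v)"

definition degree :: "'a set set \<Rightarrow> 'a \<Rightarrow> nat" where
  "degree E v = card {e\<in>E. v \<in> e}"

definition min_degree :: "'a set \<Rightarrow> 'a set set \<Rightarrow> nat" where
  "min_degree V E = Min (degree E ` V)"

definition is_cycle :: "'a set \<Rightarrow> 'a set set \<Rightarrow> 'a set set \<Rightarrow> bool" where
  "is_cycle V E C \<longleftrightarrow> (\<exists>vs. length vs \<ge> 3 \<and> distinct vs \<and> set vs \<subseteq> V \<and>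
      C = {{vs ! i, vs ! ((i + 1) mod length vs)} | i. i < length vs} \<and> C \<subseteq> E)"

definition cycles :: "'a set \<Rightarrow> 'a set set \<Rightarrow> 'a set set set" where
  "cycles V E = {C. is_cycle V E C}"

definition cactus :: "'a set \<Rightarrow> 'a set set \<Rightarrow> bool" where
  "cactus V E \<longleftrightarrow> connected_graph V E \<and>
     (\<forall>C1\<in>cycles V E. \<forall>C2\<in>cycles V E. C1 \<noteq> C2 \<longrightarrow> card (\<Union>C1 \<inter> \<Union>C2) \<le> 1)"

definition perfect_matching :: "'a set \<Rightarrow> 'a set set \<Rightarrow> 'a set set \<Rightarrow> bool" where
  "perfect_matching V E M \<longleftrightarrow> M \<subseteq> E \<and> (\<forall>v\<in>V. \<exists>!e. e \<in> M \<and> v \<in> e)"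

definition has_perfect_matching :: "'a set \<Rightarrow> 'a set set \<Rightarrow> bool" where
  "has_perfect_matching V E \<longleftrightarrow> (\<exists>M. perfect_matching V E M)"

definition sombor :: "'a set set \<Rightarrow> real" where
  "sombor E = (\<Sum>e\<in>E. sqrt (\<Sum>u\<in>e. (real (degree E u))\<^sup>2))"

definition Phi :: "nat \<Rightarrow> nat \<Rightarrow> real" where
  "Phi \<beta> t = (real \<beta> + real t - 1) * sqrt ((real \<beta> + real t)\<^sup>2 + 4)
     + sqrt ((real \<beta> + real t)\<^sup>2 + 1) + sqrt 5 * (real \<beta> - real t - 1) + 2 * sqrt 2 * real t"

end

theory Submission
  imports Defs
begin

(* The bound holds for every simple graph with minimum degree at least 2 on 2\<beta> vertices
   containing t cycles.
   With g(d) = sqrt(d^2 + 4) - sqrt 2, each edge term satisfies sqrt(a^2 + b^2) <= g(a) + g(b)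
   for a, b >= 2, so SO(G) <= sum_v d_v g(d_v).  Since 2 <= d_v <= 2\<beta> - 1, one has
   d g(d) <= 2 sqrt 2 + 2\<beta>(d - 2), and the degree sum 2m together with the cyclomatic bound
   m <= n - 1 + t gives SO(G) <= 4 sqrt 2 \<beta> + 2\<beta>(2t - 2), which an elementary estimate
   places below \<Phi>(\<beta>, t). *)

lemma simple_graph_finite_edges: "simple_graph V E \<Longrightarrow> finite E"
  unfolding simple_graph_def by (meson Pow_iff finite_Pow_iff finite_subset subsetI)

lemma simple_graph_edgeE:
  assumes "simple_graph V E" "e \<in> E"
  obtains u v where "e = {u, v}" "u \<noteq> v" "u \<in> V" "v \<in> V"
  using assms unfolding simple_graph_def by (metis card_2_iff insert_subset)

lemma degree_le_card_minus_1:
  assumes sg: "simple_graph V E" and v: "v \<in> V"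
  shows "degree E v \<le> card V - 1"
proof -
  have fV: "finite V" using sg simple_graph_def by auto
  have "{e\<in>E. v \<in> e} \<subseteq> (\<lambda>w. {v, w}) ` (V - {v})"
  proof
    fix e assume "e \<in> {e\<in>E. v \<in> e}"
    then obtain a b where "e = {a, b}" "a \<noteq> b" "a \<in> V" "b \<in> V" "v \<in> e"
      using sg by (auto elim: simple_graph_edgeE)
    then show "e \<in> (\<lambda>w. {v, w}) ` (V - {v})" by (auto simp: insert_commute)
  qed
  then have "degree E v \<le> card ((\<lambda>w. {v, w}) ` (V - {v}))"
    unfolding degree_def using fV by (intro card_mono) auto
  also have "\<dots> \<le> card (V - {v})" using fV by (intro card_image_le) auto
  finally show ?thesis using v fV by simp
qed

lemma degree_ge_2_other_neighbour:
  assumes sg: "simple_graph V E" and "2 \<le> degree E x"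
  obtains w where "adjacent E x w" "w \<noteq> x" "w \<noteq> y" "w \<in> V"
proof -
  have "\<not> {e\<in>E. x \<in> e} \<subseteq> {{x, y}}"
  proof
    assume "{e\<in>E. x \<in> e} \<subseteq> {{x, y}}"
    then have "degree E x \<le> card {{x, y}}" unfolding degree_def by (intro card_mono) auto
    with \<open>2 \<le> degree E x\<close> show False by simp
  qed
  then obtain e where "e \<in> E" "x \<in> e" "e \<noteq> {x, y}" by blast
  with sg obtain w where "e = {x, w}" "w \<noteq> x" "w \<in> V"
    by (elim simple_graph_edgeE) (auto simp: insert_commute)
  with \<open>e \<in> E\<close> \<open>e \<noteq> {x, y}\<close> show thesis by (intro that) (auto simp: adjacent_def)
qed

lemma handshake:
  fixes f :: "'a \<Rightarrow> real"
  assumes "simple_graph V E"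
  shows "(\<Sum>e\<in>E. \<Sum>u\<in>e. f u) = (\<Sum>v\<in>V. real (degree E v) * f v)"
proof -
  have fV: "finite V" and sub: "\<forall>e\<in>E. e \<subseteq> V" using assms unfolding simple_graph_def by auto
  have fE: "finite E" using assms by (rule simple_graph_finite_edges)
  have "(\<Sum>e\<in>E. \<Sum>u\<in>e. f u) = (\<Sum>e\<in>E. \<Sum>u\<in>V. if u \<in> e then f u else 0)"
    using sub by (intro sum.cong[OF refl]) (metis Int_absorb1 sum.inter_restrict[OF fV])
  also have "\<dots> = (\<Sum>u\<in>V. \<Sum>e\<in>E. if u \<in> e then f u else 0)" by (rule sum.swap)
  also have "\<dots> = (\<Sum>v\<in>V. real (degree E v) * f v)"
  proof (rule sum.cong[OF refl])
    fix u
    have "(\<Sum>e\<in>E. if u \<in> e then f u else 0) = (\<Sum>e\<in>{e\<in>E. u \<in> e}. f u)"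
      using sum.inter_filter[OF fE, of "\<lambda>_. f u" "\<lambda>e. u \<in> e"] by simp
    then show "(\<Sum>e\<in>E. if u \<in> e then f u else 0) = real (degree E u) * f u"
      by (simp add: degree_def)
  qed
  finally show ?thesis .
qed

lemma sum_degree_eq_twice_card_edges:
  assumes "simple_graph V E"
  shows "(\<Sum>v\<in>V. real (degree E v)) = 2 * real (card E)"
  using handshake[OF assms, of "\<lambda>_. 1"] assms by (simp add: simple_graph_def)

lemma cycles_subset_edges: "C \<in> cycles V E \<Longrightarrow> C \<subseteq> E"
  unfolding cycles_def is_cycle_def by (elim CollectE exE conjE)

lemma cycle_nonempty: "C \<in> cycles V E \<Longrightarrow> C \<noteq> {}"
  unfolding cycles_def is_cycle_def by (elim CollectE exE conjE) (auto intro: exI[of _ 0])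

lemma cycles_mono: "V' \<subseteq> V \<Longrightarrow> E' \<subseteq> E \<Longrightarrow> cycles V' E' \<subseteq> cycles V E"
  unfolding cycles_def is_cycle_def by (intro Collect_mono ex_mono) (meson order.trans)

lemma finite_cycles: "simple_graph V E \<Longrightarrow> finite (cycles V E)"
  by (meson PowI cycles_subset_edges finite_Pow_iff finite_subset simple_graph_finite_edges subsetI)

lemma closed_path_in_cycles:
  assumes path: "successively (adjacent E) vs" and "distinct vs" "3 \<le> length vs" "set vs \<subseteq> V"
    and closing: "adjacent E (last vs) (hd vs)"
  shows "{{vs ! i, vs ! ((i + 1) mod length vs)} | i. i < length vs} \<in> cycles V E"
proof -
  have "{vs ! i, vs ! ((i + 1) mod length vs)} \<in> E" if i: "i < length vs" for i
  proof (cases "i + 1 < length vs")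
    case True
    then show ?thesis using successively_nth[OF path, of i] by (simp add: adjacent_def)
  next
    case False
    with i have "i = length vs - 1" "i + 1 = length vs" by simp_all
    moreover have "vs \<noteq> []" using \<open>3 \<le> length vs\<close> by auto
    ultimately show ?thesis using closing by (simp add: adjacent_def last_conv_nth hd_conv_nth)
  qed
  then show ?thesis using assms unfolding cycles_def is_cycle_def by blast
qed

lemma min_degree_2_imp_cycle:
  assumes sg: "simple_graph V E" and "V \<noteq> {}" and deg: "\<forall>v\<in>V. 2 \<le> degree E v"
  shows "cycles V E \<noteq> {}"
proof -
  define path where
    "path xs \<longleftrightarrow> successively (adjacent E) xs \<and> distinct xs \<and> set xs \<subseteq> V" for xs
  have "finite V" using sg simple_graph_def by auto
  have bounded: "length xs < card V + 1" if "path xs" for xs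
  proof -
    have "length xs = card (set xs)" using that distinct_card unfolding path_def by metis
    also have "\<dots> \<le> card V" using that \<open>finite V\<close> card_mono unfolding path_def by metis
    finally show ?thesis by simp
  qed
  obtain v where "v \<in> V" using \<open>V \<noteq> {}\<close> by blast
  with deg sg obtain w where "adjacent E v w" "w \<noteq> v" "w \<in> V"
    by (elim degree_ge_2_other_neighbour) auto
  with \<open>v \<in> V\<close> have "path [v, w]" unfolding path_def by simp
  then obtain xs where "path xs" and longest: "\<And>ys. path ys \<Longrightarrow> length ys \<le> length xs"
    using ex_has_greatest_nat[of path "[v, w]" length "card V + 1"] bounded by blast
  then have "2 \<le> length xs" using \<open>path [v, w]\<close> by fastforce
  then obtain x y ys where xs: "xs = x # y # ys" by (auto simp: numeral_2_eq_2 Suc_le_length_iff)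
  with \<open>path xs\<close> have "x \<in> V" unfolding path_def by simp
  with deg sg obtain z where "adjacent E x z" "z \<noteq> x" "z \<noteq> y" "z \<in> V"
    by (elim degree_ge_2_other_neighbour) auto
  have "z \<in> set xs"
  proof (rule ccontr)
    assume "z \<notin> set xs"
    with \<open>path xs\<close> \<open>adjacent E x z\<close> \<open>z \<in> V\<close> have "path (z # xs)"
      unfolding path_def xs by (simp add: adjacent_def insert_commute)
    from longest[OF this] show False by simp
  qed
  then obtain i where i: "i < length xs" "xs ! i = z" by (meson in_set_conv_nth)
  have "2 \<le> i"
  proof (rule ccontr)
    assume "\<not> 2 \<le> i"
    then have "i = 0 \<or> i = 1" by auto
    with i xs \<open>z \<noteq> x\<close> \<open>z \<noteq> y\<close> show False by auto
  qed
  define vs where "vs = take (i + 1) xs"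
  have "last vs = z" using i by (simp add: vs_def take_Suc_conv_app_nth)
  moreover have "hd vs = x" using xs by (simp add: vs_def)
  ultimately have "adjacent E (last vs) (hd vs)"
    using \<open>adjacent E x z\<close> by (simp add: adjacent_def insert_commute)
  moreover have "successively (adjacent E) vs"
    using \<open>path xs\<close> unfolding vs_def path_def successively_conv_nth by simp
  moreover have "distinct vs" "set vs \<subseteq> V"
    using \<open>path xs\<close> set_take_subset[of "i + 1" xs] unfolding vs_def path_def by auto
  moreover have "3 \<le> length vs" using i \<open>2 \<le> i\<close> by (simp add: vs_def)
  ultimately show ?thesis using closed_path_in_cycles by blast
qed

lemma card_cycles_remove_edge:
  assumes "simple_graph V E" "C \<in> cycles V E" "e \<in> C"
  shows "card (cycles V (E - {e})) < card (cycles V E)"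
proof (rule psubset_card_mono)
  show "finite (cycles V E)" using assms(1) by (rule finite_cycles)
  have "C \<notin> cycles V (E - {e})" using assms(3) cycles_subset_edges by blast
  with assms(2) show "cycles V (E - {e}) \<subset> cycles V E" using cycles_mono[of V V "E - {e}" E] by blast
qed

lemma simple_graph_remove_vertex:
  "simple_graph V E \<Longrightarrow> simple_graph (V - {v}) {e\<in>E. v \<notin> e}"
  unfolding simple_graph_def by auto

lemma card_edges_remove_vertex:
  assumes "finite E"
  shows "card E = card {e\<in>E. v \<notin> e} + degree E v"
proof -
  have "card E = card ({e\<in>E. v \<notin> e} \<union> {e\<in>E. v \<in> e})" by (rule arg_cong[of _ _ card]) blast
  also have "\<dots> = card {e\<in>E. v \<notin> e} + card {e\<in>E. v \<in> e}"
    using assms by (intro card_Un_disjoint) auto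
  finally show ?thesis unfolding degree_def .
qed

(* Induction on |V| + |E|: delete a vertex of degree at most 1 or, if there is none,
   an edge of a cycle, which destroys that cycle. *)
lemma card_edges_less_card_vertices_plus_cycles:
  "simple_graph V E \<Longrightarrow> V \<noteq> {} \<Longrightarrow> card E < card V + card (cycles V E)"
proof (induction "card V + card E" arbitrary: V E rule: less_induct)
  case less
  have fV: "finite V" using less.prems(1) simple_graph_def by auto
  have fE: "finite E" using less.prems(1) by (rule simple_graph_finite_edges)
  show ?case
  proof (cases "\<exists>v\<in>V. degree E v \<le> 1")
    case True
    then obtain v where v: "v \<in> V" "degree E v \<le> 1" by blast
    show ?thesis
    proof (cases "V = {v}")
      case True
      have "E = {}"
      proof (rule ccontr)
        assume "E \<noteq> {}"
        then obtain e where "e \<in> E" by blast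
        with less.prems(1) True show False by (auto elim: simple_graph_edgeE)
      qed
      with True show ?thesis by simp
    next
      case False
      define V' E' where "V' = V - {v}" and "E' = {e\<in>E. v \<notin> e}"
      have "V' \<noteq> {}" using False v by (auto simp: V'_def)
      have "simple_graph V' E'"
        unfolding V'_def E'_def using less.prems(1) by (rule simple_graph_remove_vertex)
      have "card V = card V' + 1" unfolding V'_def using card_Suc_Diff1[OF fV v(1)] by linarith
      moreover have "card E \<le> card E' + 1"
        using card_edges_remove_vertex[OF fE, of v] v by (simp add: E'_def)
      moreover have "card E' \<le> card E" using fE by (auto simp: E'_def intro: card_mono)
      ultimately have "card E' < card V' + card (cycles V' E')"
        using less.hyps \<open>simple_graph V' E'\<close> \<open>V' \<noteq> {}\<close> by simp
      moreover have "card (cycles V' E') \<le> card (cycles V E)"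
        using finite_cycles[OF less.prems(1)] cycles_mono[of V' V E' E]
        by (auto simp: V'_def E'_def intro: card_mono)
      ultimately show ?thesis using \<open>card V = card V' + 1\<close> \<open>card E \<le> card E' + 1\<close> by simp
    qed
  next
    case False
    then have "cycles V E \<noteq> {}" using less.prems min_degree_2_imp_cycle by fastforce
    then obtain C e where "C \<in> cycles V E" "e \<in> C" using cycle_nonempty by blast
    then have "e \<in> E" using cycles_subset_edges by blast
    have "simple_graph V (E - {e})" using less.prems(1) by (auto simp: simple_graph_def)
    moreover have "card E = card (E - {e}) + 1" using card_Suc_Diff1[OF fE \<open>e \<in> E\<close>] by linarith
    ultimately have "card (E - {e}) < card V + card (cycles V (E - {e}))"
      using less.hyps less.prems(2) by simp
    with card_cycles_remove_edge[OF less.prems(1) \<open>C \<in> cycles V E\<close> \<open>e \<in> C\<close>]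
      \<open>card E = card (E - {e}) + 1\<close> show ?thesis by simp
  qed
qed

lemma sqrt_2_bounds: "1414 / 1000 \<le> sqrt (2::real)" "sqrt (2::real) \<le> 14143 / 10000"
  by (rule real_le_rsqrt, simp add: power2_eq_square, rule real_le_lsqrt, simp_all add: power2_eq_square)

lemma sqrt_5_bounds: "2236 / 1000 \<le> sqrt (5::real)" "sqrt (5::real) \<le> 22361 / 10000"
  by (rule real_le_rsqrt, simp add: power2_eq_square, rule real_le_lsqrt, simp_all add: power2_eq_square)

lemma sqrt_sum_squares_le:
  fixes a b :: real
  assumes "2 \<le> a" "2 \<le> b"
  shows "sqrt (a\<^sup>2 + b\<^sup>2) \<le> (sqrt (a\<^sup>2 + 4) - sqrt 2) + (sqrt (b\<^sup>2 + 4) - sqrt 2)"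
proof -
  define A B r where "A = sqrt (a\<^sup>2 + 4)" and "B = sqrt (b\<^sup>2 + 4)" and "r = sqrt (2::real)"
  have r: "r\<^sup>2 = 2" "0 \<le> r" and A: "A\<^sup>2 = a\<^sup>2 + 4" and B: "B\<^sup>2 = b\<^sup>2 + 4"
    by (simp_all add: A_def B_def r_def)
  have "(2 * r)\<^sup>2 \<le> a\<^sup>2 + 4" "(2 * r)\<^sup>2 \<le> b\<^sup>2 + 4"
    using r assms power_mono[of 2 a 2] power_mono[of 2 b 2] by (simp_all add: power_mult_distrib)
  then have "2 * r \<le> A" "2 * r \<le> B" unfolding A_def B_def by (simp_all add: real_le_rsqrt)
  then have "0 \<le> (A - 2 * r) * (B - 2 * r)" by simp
  also have "\<dots> = ((A + B - 2 * r)\<^sup>2 - (a\<^sup>2 + b\<^sup>2)) / 2"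
    using A B r by (simp add: power2_eq_square algebra_simps)
  finally have "sqrt (a\<^sup>2 + b\<^sup>2) \<le> A + B - 2 * r"
    using \<open>2 * r \<le> A\<close> \<open>2 * r \<le> B\<close> r by (intro real_le_lsqrt) auto
  then show ?thesis unfolding A_def B_def r_def by simp
qed

lemma vertex_term_le:
  fixes d n :: nat
  assumes "2 \<le> d" "d < n" "4 \<le> n"
  shows "real d * (sqrt ((real d)\<^sup>2 + 4) - sqrt 2) \<le> 2 * sqrt 2 + (real d - 2) * real n"
proof (cases "d = 2")
  case True
  have "sqrt (8::real) = 2 * sqrt 2"
    using real_sqrt_mult[of 4 2] by (simp add: real_sqrt_four)
  then show ?thesis using True by (simp add: real_sqrt_four)
next
  case False
  define x s where "x = real d" and "s = sqrt (2::real)"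
  have "3 \<le> x" "x \<le> real n - 1" "4 \<le> real n" using assms False by (auto simp: x_def)
  have "(x * sqrt (x\<^sup>2 + 4))\<^sup>2 \<le> (x\<^sup>2 + 2)\<^sup>2"
    by (simp add: power_mult_distrib power2_eq_square algebra_simps)
  then have "x * sqrt (x\<^sup>2 + 4) \<le> x\<^sup>2 + 2" by (rule power2_le_imp_le) simp
  moreover have "x\<^sup>2 + 2 - s * x \<le> 2 * s + (x - 2) * real n"
  proof -
    have s: "1414 / 1000 \<le> s" "s \<le> 14143 / 10000" using sqrt_2_bounds by (simp_all add: s_def)
    have "0 \<le> (x - 3) * (real n - 1 - x)" "0 \<le> (2 - s) * (real n - 1 - x)"
      "0 \<le> (5 * s - 7) * (real n - 4)"
      using \<open>3 \<le> x\<close> \<open>x \<le> real n - 1\<close> \<open>4 \<le> real n\<close> s by simp_all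
    then show ?thesis using s \<open>4 \<le> real n\<close> by (simp add: algebra_simps power2_eq_square)
  qed
  ultimately show ?thesis unfolding x_def[symmetric] s_def by (simp add: algebra_simps)
qed

lemma linear_bound_less_Phi:
  fixes \<beta> t :: nat
  assumes "2 \<le> \<beta>"
  shows "4 * sqrt 2 * real \<beta> + 2 * real \<beta> * (2 * real t - 2) < Phi \<beta> t"
proof -
  define b u x s q where "b = real \<beta>" and "u = real t" and "x = real \<beta> + real t"
    and "s = sqrt (2::real)" and "q = sqrt (5::real)"
  have "x \<le> sqrt (x\<^sup>2 + 4)" "x \<le> sqrt (x\<^sup>2 + 1)" by (simp_all add: real_le_rsqrt)
  moreover have "1 \<le> x" using assms by (simp add: x_def)
  ultimately have "(x - 1) * x + x \<le> (x - 1) * sqrt (x\<^sup>2 + 4) + sqrt (x\<^sup>2 + 1)"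
    by (simp add: add_mono mult_left_mono)
  then have Phi_ge: "x\<^sup>2 + q * (b - u - 1) + 2 * s * u \<le> Phi \<beta> t"
    unfolding Phi_def b_def u_def q_def s_def x_def[symmetric]
    by (simp add: power2_eq_square algebra_simps)
  have s: "1414 / 1000 \<le> s" "s \<le> 14143 / 10000" and q: "2236 / 1000 \<le> q" "q \<le> 22361 / 10000"
    using sqrt_2_bounds sqrt_5_bounds by (simp_all add: s_def q_def)
  have "2 \<le> b" "0 \<le> u" using assms by (simp_all add: b_def u_def)
  have "57 / 100 \<le> 4 - 4 * s + q" "59 / 100 \<le> 2 * s - q" using s q by simp_all
  then have "57 / 100 * b \<le> (4 - 4 * s + q) * b" "59 / 100 * u \<le> (2 * s - q) * u"
    using \<open>2 \<le> b\<close> \<open>0 \<le> u\<close> by (metis mult_right_mono order.trans zero_le_numeral)+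
  moreover have "22361 / 10000 < (b - u)\<^sup>2 + 57 / 100 * b + 59 / 100 * u"
  proof -
    consider "t = 0" | "t = 1" | "2 \<le> t" by linarith
    then show ?thesis
    proof cases
      case 1
      then show ?thesis using \<open>2 \<le> b\<close> power_mono[of 2 b 2] by (simp add: u_def)
    next
      case 2
      then have "u = 1" by (simp add: u_def)
      moreover from this have "1 \<le> (b - u)\<^sup>2" using \<open>2 \<le> b\<close> by simp
      ultimately show ?thesis using \<open>2 \<le> b\<close> by linarith
    next
      case 3
      then have "2 \<le> u" by (simp add: u_def)
      then show ?thesis using \<open>2 \<le> b\<close> zero_le_power2[of "b - u"] by linarith
    qed
  qed
  moreover have "x\<^sup>2 = (b - u)\<^sup>2 + 4 * b * u"
    by (simp add: x_def b_def u_def power2_eq_square algebra_simps)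
  ultimately have "4 * s * b + 2 * b * (2 * u - 2) < x\<^sup>2 + q * (b - u - 1) + 2 * s * u"
    using q by (simp add: algebra_simps)
  with Phi_ge show ?thesis by (simp add: b_def u_def s_def)
qed

lemma sombor_le_sum_vertex_terms:
  assumes sg: "simple_graph V E" and deg: "\<forall>v\<in>V. 2 \<le> degree E v"
  shows "sombor E \<le> (\<Sum>v\<in>V. real (degree E v) * (sqrt ((real (degree E v))\<^sup>2 + 4) - sqrt 2))"
proof -
  let ?g = "\<lambda>v. sqrt ((real (degree E v))\<^sup>2 + 4) - sqrt 2"
  have "sombor E \<le> (\<Sum>e\<in>E. \<Sum>u\<in>e. ?g u)"
    unfolding sombor_def
  proof (rule sum_mono)
    fix e assume "e \<in> E"
    with sg obtain a b where "e = {a, b}" "a \<noteq> b" "a \<in> V" "b \<in> V" by (elim simple_graph_edgeE)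
    with deg show "sqrt (\<Sum>u\<in>e. (real (degree E u))\<^sup>2) \<le> (\<Sum>u\<in>e. ?g u)"
      using sqrt_sum_squares_le[of "real (degree E a)" "real (degree E b)"] by simp
  qed
  also have "\<dots> = (\<Sum>v\<in>V. real (degree E v) * ?g v)" using sg by (rule handshake)
  finally show ?thesis .
qed

lemma sombor_le_min_degree_2:
  assumes sg: "simple_graph V E" and deg: "\<forall>v\<in>V. 2 \<le> degree E v" and "4 \<le> card V"
  shows "sombor E \<le> 2 * sqrt 2 * card V + card V * (2 * real (card E) - 2 * card V)"
proof -
  let ?d = "\<lambda>v. real (degree E v)"
  have "sombor E \<le> (\<Sum>v\<in>V. ?d v * (sqrt ((?d v)\<^sup>2 + 4) - sqrt 2))"
    using sg deg by (rule sombor_le_sum_vertex_terms)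
  also have "\<dots> \<le> (\<Sum>v\<in>V. 2 * sqrt 2 + (?d v - 2) * card V)"
  proof (rule sum_mono)
    fix v assume "v \<in> V"
    have "degree E v < card V"
      using degree_le_card_minus_1[OF sg \<open>v \<in> V\<close>] \<open>4 \<le> card V\<close> by linarith
    with deg \<open>v \<in> V\<close> \<open>4 \<le> card V\<close>
    show "?d v * (sqrt ((?d v)\<^sup>2 + 4) - sqrt 2) \<le> 2 * sqrt 2 + (?d v - 2) * card V"
      by (intro vertex_term_le) auto
  qed
  also have "\<dots> = 2 * sqrt 2 * card V + card V * ((\<Sum>v\<in>V. ?d v) - 2 * card V)"
    by (simp add: sum.distrib sum_subtractf sum_distrib_left sum_distrib_right algebra_simps)
  also have "(\<Sum>v\<in>V. ?d v) = 2 * real (card E)" using sg by (rule sum_degree_eq_twice_card_edges)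
  finally show ?thesis .
qed

theorem lemma4p1:
  fixes V :: "'a set" and E :: "'a set set" and \<beta> t :: nat
  assumes "simple_graph V E"
    and "cactus V E"
    and "\<beta> \<ge> 2"
    and "card V = 2 * \<beta>"
    and "card (cycles V E) = t"
    and "has_perfect_matching V E"
    and "min_degree V E \<ge> 2"
  shows "sombor E < Phi \<beta> t"
proof -
  have "finite V" "V \<noteq> {}" using assms(1,3,4) by (auto simp: simple_graph_def)
  then have deg: "\<forall>v\<in>V. 2 \<le> degree E v"
    using assms(7) Min_le[of "degree E ` V"] unfolding min_degree_def by fastforce
  have "real (card E) \<le> 2 * real \<beta> + real t - 1"
    using card_edges_less_card_vertices_plus_cycles[OF assms(1) \<open>V \<noteq> {}\<close>] assms(4,5) by linarith
  then have "2 * real \<beta> * (2 * real (card E) - 2 * (2 * real \<beta>)) \<le> 2 * real \<beta> * (2 * real t - 2)"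
    by (intro mult_left_mono) auto
  moreover have "sombor E \<le>
      2 * sqrt 2 * (2 * real \<beta>) + 2 * real \<beta> * (2 * real (card E) - 2 * (2 * real \<beta>))"
    using sombor_le_min_degree_2[OF assms(1) deg] assms(3,4) by simp
  ultimately have "sombor E \<le> 4 * sqrt 2 * real \<beta> + 2 * real \<beta> * (2 * real t - 2)" by simp
  also have "\<dots> < Phi \<beta> t" using assms(3) by (rule linear_bound_less_Phi)
  finally show ?thesis .
qed

end
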